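(* Let $\mathcal C$ be an additive strict symmetric monoidal category and let $(L,\ell)$ be a Lie algebra in $\mathcal C$. If $L$ is derived nilpotent, then $L$ is solvable.
   Context: Standing conventions: $\mathcal C$ is an additive symmetric monoidal category (taken strict), with symmetric braiding $c$ (so $c_{V,U}\circ c_{U,V}=\mathrm{id}_{U\otimes V}$); the tensor product is additive in each argument. For an object $U$ put $c^{(n)}_U := c_{U^{\otimes(n-1)},U}\in\mathrm{End}(U^{\otimes n})$. For $h\in\mathrm{Hom}(U\otimes U,U)$ put $h^{(2)}:=h$ and $h^{(n)}:=h\circ(\mathrm{id}_U\otimes h^{(n-1)})\in\mathrm{Hom}(U^{\otimes n},U)$ for $n>2$. A Lie algebra in $\mathcal C$ is a pair $(L,\ell)$ with $\ell\in\mathrm{Hom}(L\otimes L,L)$ satisfying antisymmetry $\ell\circ(\mathrm{id}_{L\otimes L}+c_{L,L})=0$ and the Jacobi identity $\ell^{(3)}\circ[\mathrm{id}_{L^{\otimes 3}}+c^{(3)}_L+(c^{(3)}_L)^2]=0$. Define $\ell^{[2]}:=\ell$ and $\ell^{[n]}:=\ell\circ(\ell^{[n-1]}\otimes\ell^{[n-1]})\in\mathrm{Hom}(L^{\otimes 2^{n-1}},L)$ for $n>2$. $L$ is solvable iff $\ell^{[n]}=0$ for sufficiently large $n$; $L$ is derived nilpotent iff $\ell^{(n)}\circ\ell^{\otimes n}=0$ for sufficiently large $n$. *)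

theory Defs
  imports Main
begin

text \<open>Comp g f denotes g after f.\<close>

record ('o, 'm) smcat =
  Dom   :: "'m \<Rightarrow> 'o"
  Cod   :: "'m \<Rightarrow> 'o"
  Comp  :: "'m \<Rightarrow> 'm \<Rightarrow> 'm"
  Idm   :: "'o \<Rightarrow> 'm"
  TensO :: "'o \<Rightarrow> 'o \<Rightarrow> 'o"
  TensM :: "'m \<Rightarrow> 'm \<Rightarrow> 'm"
  Unit  :: "'o"
  Br    :: "'o \<Rightarrow> 'o \<Rightarrow> 'm"
  Add   :: "'m \<Rightarrow> 'm \<Rightarrow> 'm"
  Neg   :: "'m \<Rightarrow> 'm"
  Zero  :: "'o \<Rightarrow> 'o \<Rightarrow> 'm"

definition hom :: "('o, 'm) smcat \<Rightarrow> 'o \<Rightarrow> 'o \<Rightarrow> 'm set" where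
  "hom C A B = {f. Dom C f = A \<and> Cod C f = B}"

locale add_sym_mon_cat =
  fixes C :: "('o, 'm) smcat"
  assumes
    comp_hom: "\<And>f g A B D. f \<in> hom C A B \<Longrightarrow> g \<in> hom C B D \<Longrightarrow> Comp C g f \<in> hom C A D"
and id_hom: "\<And>A. Idm C A \<in> hom C A A"
and comp_assoc: "\<And>f g h A B D E. f \<in> hom C A B \<Longrightarrow> g \<in> hom C B D \<Longrightarrow> h \<in> hom C D E \<Longrightarrow>
        Comp C h (Comp C g f) = Comp C (Comp C h g) f"
and id_left: "\<And>f A B. f \<in> hom C A B \<Longrightarrow> Comp C (Idm C B) f = f"
and id_right: "\<And>f A B. f \<in> hom C A B \<Longrightarrow> Comp C f (Idm C A) = f"
and add_hom: "\<And>f g A B. f \<in> hom C A B \<Longrightarrow> g \<in> hom C A B \<Longrightarrow> Add C f g \<in> hom C A B"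
and neg_hom: "\<And>f A B. f \<in> hom C A B \<Longrightarrow> Neg C f \<in> hom C A B"
and zero_hom: "\<And>A B. Zero C A B \<in> hom C A B"
and add_assoc: "\<And>f g h A B. f \<in> hom C A B \<Longrightarrow> g \<in> hom C A B \<Longrightarrow> h \<in> hom C A B \<Longrightarrow>
        Add C (Add C f g) h = Add C f (Add C g h)"
and add_comm: "\<And>f g A B. f \<in> hom C A B \<Longrightarrow> g \<in> hom C A B \<Longrightarrow> Add C f g = Add C g f"
and add_zero: "\<And>f A B. f \<in> hom C A B \<Longrightarrow> Add C f (Zero C A B) = f"
and add_neg: "\<And>f A B. f \<in> hom C A B \<Longrightarrow> Add C f (Neg C f) = Zero C A B"
and comp_add_left: "\<And>f g g' A B D. f \<in> hom C A B \<Longrightarrow> g \<in> hom C B D \<Longrightarrow> g' \<in> hom C B D \<Longrightarrow>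
        Comp C (Add C g g') f = Add C (Comp C g f) (Comp C g' f)"
and comp_add_right: "\<And>f f' g A B D. f \<in> hom C A B \<Longrightarrow> f' \<in> hom C A B \<Longrightarrow> g \<in> hom C B D \<Longrightarrow>
        Comp C g (Add C f f') = Add C (Comp C g f) (Comp C g f')"
and zero_object: "\<exists>Z. Idm C Z = Zero C Z Z"
and biproducts: "\<And>A B. \<exists>S i1 i2 p1 p2. i1 \<in> hom C A S \<and> i2 \<in> hom C B S \<and>
        p1 \<in> hom C S A \<and> p2 \<in> hom C S B \<and>
        Comp C p1 i1 = Idm C A \<and> Comp C p2 i2 = Idm C B \<and>
        Comp C p1 i2 = Zero C B A \<and> Comp C p2 i1 = Zero C A B \<and>
        Add C (Comp C i1 p1) (Comp C i2 p2) = Idm C S"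
and tens_hom: "\<And>f g A B A' B'. f \<in> hom C A B \<Longrightarrow> g \<in> hom C A' B' \<Longrightarrow>
        TensM C f g \<in> hom C (TensO C A A') (TensO C B B')"
and tens_id: "\<And>A B. TensM C (Idm C A) (Idm C B) = Idm C (TensO C A B)"
and tens_comp: "\<And>f g f' g' A B D A' B' D'. f \<in> hom C A B \<Longrightarrow> g \<in> hom C B D \<Longrightarrow>
        f' \<in> hom C A' B' \<Longrightarrow> g' \<in> hom C B' D' \<Longrightarrow>
        TensM C (Comp C g f) (Comp C g' f') = Comp C (TensM C g g') (TensM C f f')"
and tensO_assoc: "\<And>A B D. TensO C (TensO C A B) D = TensO C A (TensO C B D)"
and tensO_unit_left: "\<And>A. TensO C (Unit C) A = A"
and tensO_unit_right: "\<And>A. TensO C A (Unit C) = A"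
and tensM_assoc: "\<And>f g h. TensM C (TensM C f g) h = TensM C f (TensM C g h)"
and tensM_unit_left: "\<And>f. TensM C (Idm C (Unit C)) f = f"
and tensM_unit_right: "\<And>f. TensM C f (Idm C (Unit C)) = f"
and tens_add_left: "\<And>f f' g A B A' B'. f \<in> hom C A B \<Longrightarrow> f' \<in> hom C A B \<Longrightarrow> g \<in> hom C A' B' \<Longrightarrow>
        TensM C (Add C f f') g = Add C (TensM C f g) (TensM C f' g)"
and tens_add_right: "\<And>f g g' A B A' B'. f \<in> hom C A B \<Longrightarrow> g \<in> hom C A' B' \<Longrightarrow> g' \<in> hom C A' B' \<Longrightarrow>
        TensM C f (Add C g g') = Add C (TensM C f g) (TensM C f g')"
and br_hom: "\<And>A B. Br C A B \<in> hom C (TensO C A B) (TensO C B A)"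
and br_natural: "\<And>f g A A' B B'. f \<in> hom C A A' \<Longrightarrow> g \<in> hom C B B' \<Longrightarrow>
        Comp C (Br C A' B') (TensM C f g) = Comp C (TensM C g f) (Br C A B)"
and br_hexagon1: "\<And>A B D. Br C A (TensO C B D) =
        Comp C (TensM C (Idm C B) (Br C A D)) (TensM C (Br C A B) (Idm C D))"
and br_hexagon2: "\<And>A B D. Br C (TensO C A B) D =
        Comp C (TensM C (Br C A D) (Idm C B)) (TensM C (Idm C A) (Br C B D))"
and br_symm: "\<And>A B. Comp C (Br C B A) (Br C A B) = Idm C (TensO C A B)"

fun tpow :: "('o, 'm) smcat \<Rightarrow> nat \<Rightarrow> 'o \<Rightarrow> 'o" where
  "tpow C 0 U = Unit C"
| "tpow C (Suc n) U = TensO C U (tpow C n U)"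

fun mpow :: "('o, 'm) smcat \<Rightarrow> nat \<Rightarrow> 'm \<Rightarrow> 'm" where
  "mpow C 0 f = Idm C (Unit C)"
| "mpow C (Suc n) f = TensM C f (mpow C n f)"

definition cyc :: "('o, 'm) smcat \<Rightarrow> nat \<Rightarrow> 'o \<Rightarrow> 'm" where
  "cyc C n U = Br C (tpow C (n - 1) U) U"

text \<open>nest C U h k = h^{(k+2)}.\<close>
fun nest :: "('o, 'm) smcat \<Rightarrow> 'o \<Rightarrow> 'm \<Rightarrow> nat \<Rightarrow> 'm" where
  "nest C U h 0 = h"
| "nest C U h (Suc k) = Comp C h (TensM C (Idm C U) (nest C U h k))"

definition hpow :: "('o, 'm) smcat \<Rightarrow> 'o \<Rightarrow> 'm \<Rightarrow> nat \<Rightarrow> 'm" where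
  "hpow C U h n = nest C U h (n - 2)"

text \<open>dnest C l k = l^{[k+2]}.\<close>
fun dnest :: "('o, 'm) smcat \<Rightarrow> 'm \<Rightarrow> nat \<Rightarrow> 'm" where
  "dnest C l 0 = l"
| "dnest C l (Suc k) = Comp C l (TensM C (dnest C l k) (dnest C l k))"

definition dpow :: "('o, 'm) smcat \<Rightarrow> 'm \<Rightarrow> nat \<Rightarrow> 'm" where
  "dpow C l n = dnest C l (n - 2)"

definition lie_algebra :: "('o, 'm) smcat \<Rightarrow> 'o \<Rightarrow> 'm \<Rightarrow> bool" where
  "lie_algebra C L l \<longleftrightarrow>
     l \<in> hom C (TensO C L L) L \<and>
     Comp C l (Add C (Idm C (TensO C L L)) (Br C L L)) = Zero C (TensO C L L) L \<and>
     Comp C (hpow C L l 3)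
        (Add C (Add C (Idm C (tpow C 3 L)) (cyc C 3 L)) (Comp C (cyc C 3 L) (cyc C 3 L)))
       = Zero C (tpow C 3 L) L"

definition solvable :: "('o, 'm) smcat \<Rightarrow> 'o \<Rightarrow> 'm \<Rightarrow> bool" where
  "solvable C L l \<longleftrightarrow> (\<exists>N. \<forall>n\<ge>N. dpow C l n = Zero C (tpow C (2 ^ (n - 1)) L) L)"

definition derived_nilpotent :: "('o, 'm) smcat \<Rightarrow> 'o \<Rightarrow> 'm \<Rightarrow> bool" where
  "derived_nilpotent C L l \<longleftrightarrow>
     (\<exists>N. \<forall>n\<ge>N. Comp C (hpow C L l n) (mpow C n l) = Zero C (tpow C n (TensO C L L)) L)"

end

theory Submission
  imports Defs
begin

text \<open>A morphism \<open>a : A \<rightarrow> L\<close> is treated as a generalized element of \<open>L\<close>, and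
  \<open>\<lbrace>a, b\<rbrace> = \<ell> \<circ> (a \<otimes> b) : A \<otimes> B \<rightarrow> L\<close> as the bracket of two of them. Let
  \<open>d_0 = \<ell>\<close>, \<open>d_(k+1) = \<lbrace>\<ell>, d_k\<rbrace>\<close> (so \<open>d_k = \<ell>^(k+1) \<circ> \<ell>^\<otimes>(k+1)\<close> for \<open>k \<ge> 1\<close>), and let \<open>\<gamma>_k\<close> consist of
  the morphisms into \<open>L\<close> generated from \<open>d_k\<close> by precomposition, sums and negatives:
  the \<open>(k+1)\<close>-st term of the lower central series of the derived algebra \<open>[L, L]\<close>.
  The Jacobi identity in the form \<open>\<lbrace>\<lbrace>x, y\<rbrace>, z\<rbrace> = \<lbrace>x, \<lbrace>y, z\<rbrace>\<rbrace> - \<lbrace>y, \<lbrace>x, z\<rbrace>\<rbrace> \<circ> \<tau>\<close>, with \<open>\<tau>\<close> a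
  braiding, gives \<open>\<lbrace>\<gamma>_i, \<gamma>_j\<rbrace> \<subseteq> \<gamma>_(i+j+1)\<close> and hence \<open>\<ell>^[k+2] \<in> \<gamma>_(2^k - 1)\<close>. Derived
  nilpotency says that \<open>d_k = 0\<close> for large \<open>k\<close>, which kills all of \<open>\<gamma>_k\<close>.\<close>

context add_sym_mon_cat
begin

abbreviation comp_op (infixr "\<cdot>" 70) where "g \<cdot> f \<equiv> Comp C g f"
abbreviation tens_op (infixr "\<otimes>" 75) where "f \<otimes> g \<equiv> TensM C f g"
abbreviation add_op (infixl "\<oplus>" 65) where "f \<oplus> g \<equiv> Add C f g"
abbreviation neg_op ("\<ominus> _" [80] 80) where "\<ominus> f \<equiv> Neg C f"

declare tensO_assoc[simp] tensO_unit_left[simp] tensO_unit_right[simp]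

lemma add_idem_imp_zero:
  assumes x: "x \<in> hom C A B" and idem: "x \<oplus> x = x"
  shows "x = Zero C A B"
proof -
  have "Zero C A B = x \<oplus> \<ominus> x" using add_neg x by simp
  also have "\<dots> = x \<oplus> x \<oplus> \<ominus> x" using idem by simp
  also have "\<dots> = x \<oplus> (x \<oplus> \<ominus> x)" using add_assoc x neg_hom by blast
  also have "\<dots> = x" using add_neg add_zero x by simp
  finally show ?thesis by simp
qed

lemma comp_zero_left:
  assumes \<phi>: "\<phi> \<in> hom C A B"
  shows "Zero C B D \<cdot> \<phi> = Zero C A D"
proof (rule add_idem_imp_zero)
  show "Zero C B D \<cdot> \<phi> \<in> hom C A D" using comp_hom zero_hom \<phi> by blast
  show "Zero C B D \<cdot> \<phi> \<oplus> Zero C B D \<cdot> \<phi> = Zero C B D \<cdot> \<phi>"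
    using comp_add_left[OF \<phi> zero_hom zero_hom] add_zero[OF zero_hom] by simp
qed

lemma comp_zero_right:
  assumes g: "g \<in> hom C B D"
  shows "g \<cdot> Zero C A B = Zero C A D"
proof (rule add_idem_imp_zero)
  show "g \<cdot> Zero C A B \<in> hom C A D" using comp_hom zero_hom g by blast
  show "g \<cdot> Zero C A B \<oplus> g \<cdot> Zero C A B = g \<cdot> Zero C A B"
    using comp_add_right[OF zero_hom zero_hom g] add_zero[OF zero_hom] by simp
qed

lemma tens_zero_left:
  assumes g: "g \<in> hom C A' B'"
  shows "Zero C A B \<otimes> g = Zero C (TensO C A A') (TensO C B B')"
proof (rule add_idem_imp_zero)
  show "Zero C A B \<otimes> g \<in> hom C (TensO C A A') (TensO C B B')" using tens_hom zero_hom g by blast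
  show "Zero C A B \<otimes> g \<oplus> Zero C A B \<otimes> g = Zero C A B \<otimes> g"
    using tens_add_left[OF zero_hom zero_hom g] add_zero[OF zero_hom] by simp
qed

lemma tens_zero_right:
  assumes f: "f \<in> hom C A B"
  shows "f \<otimes> Zero C A' B' = Zero C (TensO C A A') (TensO C B B')"
proof (rule add_idem_imp_zero)
  show "f \<otimes> Zero C A' B' \<in> hom C (TensO C A A') (TensO C B B')" using tens_hom zero_hom f by blast
  show "f \<otimes> Zero C A' B' \<oplus> f \<otimes> Zero C A' B' = f \<otimes> Zero C A' B'"
    using tens_add_right[OF f zero_hom zero_hom] add_zero[OF zero_hom] by simp
qed

lemma neg_unique:
  assumes a: "a \<in> hom C A B" and b: "b \<in> hom C A B" and sum: "a \<oplus> b = Zero C A B"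
  shows "b = \<ominus> a"
proof -
  have na: "\<ominus> a \<in> hom C A B" using neg_hom a by blast
  have "\<ominus> a = \<ominus> a \<oplus> Zero C A B" using add_zero na by simp
  also have "\<dots> = \<ominus> a \<oplus> (a \<oplus> b)" using sum by simp
  also have "\<dots> = (a \<oplus> \<ominus> a) \<oplus> b" using add_assoc add_comm na a b by metis
  also have "\<dots> = b" using add_neg add_comm add_zero zero_hom a b by metis
  finally show ?thesis by simp
qed

lemma neg_neg: "a \<in> hom C A B \<Longrightarrow> \<ominus> \<ominus> a = a"
  using neg_unique[of "\<ominus> a" A B a] neg_hom add_comm add_neg by metis

lemma neg_zero: "\<ominus> Zero C A B = Zero C A B"
  using neg_unique[OF zero_hom zero_hom add_zero[OF zero_hom]] by simp

lemma comp_neg_right: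
  assumes f: "f \<in> hom C A B" and g: "g \<in> hom C B D"
  shows "g \<cdot> \<ominus> f = \<ominus> (g \<cdot> f)"
proof (rule neg_unique)
  show "g \<cdot> f \<in> hom C A D" "g \<cdot> \<ominus> f \<in> hom C A D" using comp_hom neg_hom f g by blast+
  show "g \<cdot> f \<oplus> g \<cdot> \<ominus> f = Zero C A D"
    using comp_add_right[OF f neg_hom[OF f] g] add_neg[OF f] comp_zero_right[OF g] by simp
qed

lemma comp_neg_left:
  assumes f: "f \<in> hom C A B" and g: "g \<in> hom C B D"
  shows "(\<ominus> g) \<cdot> f = \<ominus> (g \<cdot> f)"
proof (rule neg_unique)
  show "g \<cdot> f \<in> hom C A D" "(\<ominus> g) \<cdot> f \<in> hom C A D" using comp_hom neg_hom f g by blast+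
  show "g \<cdot> f \<oplus> (\<ominus> g) \<cdot> f = Zero C A D"
    using comp_add_left[OF f g neg_hom[OF g]] add_neg[OF g] comp_zero_left[OF f] by simp
qed

lemma tens_neg_left:
  assumes f: "f \<in> hom C A B" and g: "g \<in> hom C A' B'"
  shows "(\<ominus> f) \<otimes> g = \<ominus> (f \<otimes> g)"
proof (rule neg_unique)
  show "f \<otimes> g \<in> hom C (TensO C A A') (TensO C B B')"
    "(\<ominus> f) \<otimes> g \<in> hom C (TensO C A A') (TensO C B B')"
    using tens_hom neg_hom f g by blast+
  show "f \<otimes> g \<oplus> (\<ominus> f) \<otimes> g = Zero C (TensO C A A') (TensO C B B')"
    using tens_add_left[OF f neg_hom[OF f] g] add_neg[OF f] tens_zero_left[OF g] by simp
qed

lemma tens_neg_right: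
  assumes f: "f \<in> hom C A B" and g: "g \<in> hom C A' B'"
  shows "f \<otimes> \<ominus> g = \<ominus> (f \<otimes> g)"
proof (rule neg_unique)
  show "f \<otimes> g \<in> hom C (TensO C A A') (TensO C B B')"
    "f \<otimes> \<ominus> g \<in> hom C (TensO C A A') (TensO C B B')"
    using tens_hom neg_hom f g by blast+
  show "f \<otimes> g \<oplus> f \<otimes> \<ominus> g = Zero C (TensO C A A') (TensO C B B')"
    using tens_add_right[OF f g neg_hom[OF g]] add_neg[OF g] tens_zero_right[OF f] by simp
qed

lemma eq_add_if_add_neg_add_zero:
  assumes a: "a \<in> hom C X Y" and w: "w \<in> hom C X Y" and b: "b \<in> hom C X Y"
    and sum: "a \<oplus> \<ominus> w \<oplus> b = Zero C X Y"
  shows "w = a \<oplus> b"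
proof -
  have nw: "\<ominus> w \<in> hom C X Y" using neg_hom w by blast
  have ab: "a \<oplus> b \<in> hom C X Y" using add_hom a b by blast
  have "a \<oplus> b \<oplus> \<ominus> w = a \<oplus> \<ominus> w \<oplus> b" using add_assoc add_comm a b nw by metis
  then have "\<ominus> w = \<ominus> (a \<oplus> b)" using neg_unique[OF ab nw] sum by simp
  then show ?thesis using neg_neg[OF w] neg_neg[OF ab] by metis
qed

lemma tpow_add: "TensO C (tpow C m X) (tpow C n X) = tpow C (m + n) X"
  by (induction m) auto

lemma mpow_hom: "f \<in> hom C A B \<Longrightarrow> mpow C n f \<in> hom C (tpow C n A) (tpow C n B)"
  by (induction n) (auto intro: tens_hom id_hom)

lemma nest_hom: "h \<in> hom C (TensO C U U) U \<Longrightarrow> nest C U h k \<in> hom C (tpow C (Suc (Suc k)) U) U"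
proof (induction k)
  case 0
  then show ?case by simp
next
  case (Suc k)
  have "Idm C U \<otimes> nest C U h k \<in> hom C (TensO C U (tpow C (Suc (Suc k)) U)) (TensO C U U)"
    using tens_hom[OF id_hom Suc.IH[OF Suc.prems]] by simp
  then show ?case using comp_hom Suc.prems by fastforce
qed

lemma comp_br_cyclic:
  assumes x: "x \<in> hom C A X" and y: "y \<in> hom C B Y" and z: "z \<in> hom C D Z"
    and f: "f \<in> hom C (TensO C Z (TensO C X Y)) W"
  shows "(f \<cdot> Br C (TensO C X Y) Z) \<cdot> (x \<otimes> y \<otimes> z) = (f \<cdot> (z \<otimes> x \<otimes> y)) \<cdot> Br C (TensO C A B) D"
proof -
  have xy: "x \<otimes> y \<in> hom C (TensO C A B) (TensO C X Y)" using tens_hom x y by blast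
  have xyz: "x \<otimes> y \<otimes> z \<in> hom C (TensO C A (TensO C B D)) (TensO C X (TensO C Y Z))"
    using tens_hom[OF x tens_hom[OF y z]] .
  have zxy: "z \<otimes> x \<otimes> y \<in> hom C (TensO C D (TensO C A B)) (TensO C Z (TensO C X Y))"
    using tens_hom[OF z xy] .
  have "(f \<cdot> Br C (TensO C X Y) Z) \<cdot> (x \<otimes> y \<otimes> z) = f \<cdot> (Br C (TensO C X Y) Z \<cdot> (x \<otimes> y \<otimes> z))"
    using comp_assoc[OF xyz _ f] br_hom[of "TensO C X Y" Z] by simp
  also have "Br C (TensO C X Y) Z \<cdot> (x \<otimes> y \<otimes> z) = (z \<otimes> x \<otimes> y) \<cdot> Br C (TensO C A B) D"
    using br_natural[OF xy z] by (simp add: tensM_assoc)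
  also have "f \<cdot> ((z \<otimes> x \<otimes> y) \<cdot> Br C (TensO C A B) D) = (f \<cdot> (z \<otimes> x \<otimes> y)) \<cdot> Br C (TensO C A B) D"
    using comp_assoc[OF _ zxy f] br_hom[of "TensO C A B" D] by simp
  finally show ?thesis .
qed

end

locale lie_algebra_object = add_sym_mon_cat C for C :: "('o, 'm) smcat" +
  fixes L :: 'o and l :: 'm
  assumes lie: "lie_algebra C L l"
begin

abbreviation bracket ("\<lbrace>_, _\<rbrace>") where "\<lbrace>a, b\<rbrace> \<equiv> l \<cdot> (a \<otimes> b)"

lemma l_hom: "l \<in> hom C (TensO C L L) L"
  using lie unfolding lie_algebra_def by blast

lemma bracket_hom: "a \<in> hom C A L \<Longrightarrow> b \<in> hom C B L \<Longrightarrow> \<lbrace>a, b\<rbrace> \<in> hom C (TensO C A B) L"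
  using comp_hom tens_hom l_hom by blast

lemma l_comp_br: "l \<cdot> Br C L L = \<ominus> l"
proof (rule neg_unique[OF l_hom])
  show "l \<cdot> Br C L L \<in> hom C (TensO C L L) L" using comp_hom br_hom l_hom by blast
  have "l \<cdot> (Idm C (TensO C L L) \<oplus> Br C L L) = Zero C (TensO C L L) L"
    using lie unfolding lie_algebra_def by blast
  then show "l \<oplus> l \<cdot> Br C L L = Zero C (TensO C L L) L"
    using comp_add_right[OF id_hom br_hom l_hom] id_right[OF l_hom] by simp
qed

lemma bracket_add_left:
  assumes "a \<in> hom C A L" "a' \<in> hom C A L" "b \<in> hom C B L"
  shows "\<lbrace>a \<oplus> a', b\<rbrace> = \<lbrace>a, b\<rbrace> \<oplus> \<lbrace>a', b\<rbrace>"
  using tens_add_left[OF assms] comp_add_right[OF tens_hom tens_hom l_hom] assms by simp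

lemma bracket_add_right:
  assumes "a \<in> hom C A L" "b \<in> hom C B L" "b' \<in> hom C B L"
  shows "\<lbrace>a, b \<oplus> b'\<rbrace> = \<lbrace>a, b\<rbrace> \<oplus> \<lbrace>a, b'\<rbrace>"
  using tens_add_right[OF assms] comp_add_right[OF tens_hom tens_hom l_hom] assms by simp

lemma bracket_neg_left:
  assumes "a \<in> hom C A L" "b \<in> hom C B L"
  shows "\<lbrace>\<ominus> a, b\<rbrace> = \<ominus> \<lbrace>a, b\<rbrace>"
  using tens_neg_left[OF assms] comp_neg_right[OF tens_hom[OF assms] l_hom] by simp

lemma bracket_neg_right:
  assumes "a \<in> hom C A L" "b \<in> hom C B L"
  shows "\<lbrace>a, \<ominus> b\<rbrace> = \<ominus> \<lbrace>a, b\<rbrace>"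
  using tens_neg_right[OF assms] comp_neg_right[OF tens_hom[OF assms] l_hom] by simp

lemma bracket_comp:
  assumes a: "a \<in> hom C A L" and \<phi>: "\<phi> \<in> hom C A' A" and b: "b \<in> hom C B L"
    and \<psi>: "\<psi> \<in> hom C B' B"
  shows "\<lbrace>a \<cdot> \<phi>, b \<cdot> \<psi>\<rbrace> = \<lbrace>a, b\<rbrace> \<cdot> (\<phi> \<otimes> \<psi>)"
  using tens_comp[OF \<phi> a \<psi> b] comp_assoc[OF tens_hom[OF \<phi> \<psi>] tens_hom[OF a b] l_hom] by simp

lemma bracket_swap:
  assumes u: "u \<in> hom C U L" and v: "v \<in> hom C V L"
  shows "\<lbrace>v, u\<rbrace> \<cdot> Br C U V = \<ominus> \<lbrace>u, v\<rbrace>"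
proof -
  have vu: "v \<otimes> u \<in> hom C (TensO C V U) (TensO C L L)" using tens_hom u v by blast
  have uv: "u \<otimes> v \<in> hom C (TensO C U V) (TensO C L L)" using tens_hom u v by blast
  have "\<lbrace>v, u\<rbrace> \<cdot> Br C U V = l \<cdot> ((v \<otimes> u) \<cdot> Br C U V)"
    using comp_assoc[OF br_hom vu l_hom] by simp
  also have "\<dots> = l \<cdot> (Br C L L \<cdot> (u \<otimes> v))" using br_natural[OF u v] by simp
  also have "\<dots> = (l \<cdot> Br C L L) \<cdot> (u \<otimes> v)" using comp_assoc[OF uv br_hom l_hom] by simp
  also have "\<dots> = \<ominus> \<lbrace>u, v\<rbrace>" using l_comp_br comp_neg_left[OF uv l_hom] by simp
  finally show ?thesis .
qed

lemma jacobi_cyclic: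
  "(l \<cdot> (Idm C L \<otimes> l)) \<cdot>
     (Idm C (TensO C L (TensO C L L)) \<oplus> Br C (TensO C L L) L
        \<oplus> Br C (TensO C L L) L \<cdot> Br C (TensO C L L) L)
   = Zero C (TensO C L (TensO C L L)) L"
proof -
  have "hpow C L l 3 = l \<cdot> (Idm C L \<otimes> l)" by (simp add: hpow_def numeral_3_eq_3)
  moreover have "tpow C 3 L = TensO C L (TensO C L L)" by (simp add: numeral_3_eq_3)
  moreover have "cyc C 3 L = Br C (TensO C L L) L" by (simp add: cyc_def numeral_3_eq_3)
  ultimately show ?thesis using lie unfolding lie_algebra_def by simp
qed

lemma bracket_assoc_tens:
  assumes u: "u \<in> hom C U L" and v: "v \<in> hom C V L" and w: "w \<in> hom C W L"
  shows "(l \<cdot> (Idm C L \<otimes> l)) \<cdot> (u \<otimes> v \<otimes> w) = \<lbrace>u, \<lbrace>v, w\<rbrace>\<rbrace>"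
proof -
  have vw: "v \<otimes> w \<in> hom C (TensO C V W) (TensO C L L)" using tens_hom v w by blast
  have "(l \<cdot> (Idm C L \<otimes> l)) \<cdot> (u \<otimes> v \<otimes> w) = l \<cdot> ((Idm C L \<otimes> l) \<cdot> (u \<otimes> v \<otimes> w))"
    using comp_assoc[OF tens_hom[OF u vw] tens_hom[OF id_hom l_hom] l_hom] by simp
  also have "(Idm C L \<otimes> l) \<cdot> (u \<otimes> v \<otimes> w) = (Idm C L \<cdot> u) \<otimes> \<lbrace>v, w\<rbrace>"
    using tens_comp[OF u id_hom vw l_hom] by simp
  finally show ?thesis using id_left[OF u] by simp
qed

lemma jacobi_generalized:
  assumes x: "x \<in> hom C A L" and y: "y \<in> hom C B L" and z: "z \<in> hom C D L"
  shows "\<lbrace>x, \<lbrace>y, z\<rbrace>\<rbrace> \<oplus> \<lbrace>z, \<lbrace>x, y\<rbrace>\<rbrace> \<cdot> Br C (TensO C A B) D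
           \<oplus> (\<lbrace>y, \<lbrace>z, x\<rbrace>\<rbrace> \<cdot> Br C (TensO C D A) B) \<cdot> Br C (TensO C A B) D
         = Zero C (TensO C A (TensO C B D)) L"
proof -
  define J where "J = l \<cdot> (Idm C L \<otimes> l)"
  define c where "c = Br C (TensO C L L) L"
  define P where "P = x \<otimes> y \<otimes> z"
  have Jh: "J \<in> hom C (TensO C L (TensO C L L)) L"
    unfolding J_def using comp_hom tens_hom[OF id_hom l_hom] l_hom by blast
  have ch: "c \<in> hom C (TensO C L (TensO C L L)) (TensO C L (TensO C L L))"
    unfolding c_def using br_hom[of "TensO C L L" L] by simp
  have Jc: "J \<cdot> c \<in> hom C (TensO C L (TensO C L L)) L" using comp_hom[OF ch Jh] .
  have Ph: "P \<in> hom C (TensO C A (TensO C B D)) (TensO C L (TensO C L L))"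
    unfolding P_def using tens_hom[OF x tens_hom[OF y z]] .
  have "(J \<cdot> (Idm C (TensO C L (TensO C L L)) \<oplus> c \<oplus> c \<cdot> c)) \<cdot> P
      = Zero C (TensO C A (TensO C B D)) L"
    using jacobi_cyclic comp_zero_left[OF Ph] unfolding J_def c_def by simp
  moreover have "J \<cdot> (Idm C (TensO C L (TensO C L L)) \<oplus> c \<oplus> c \<cdot> c) = J \<oplus> J \<cdot> c \<oplus> (J \<cdot> c) \<cdot> c"
    using comp_add_right[OF add_hom[OF id_hom ch] comp_hom[OF ch ch] Jh]
      comp_add_right[OF id_hom ch Jh] id_right[OF Jh] comp_assoc[OF ch ch Jh] by simp
  moreover have "(J \<oplus> J \<cdot> c \<oplus> (J \<cdot> c) \<cdot> c) \<cdot> P = J \<cdot> P \<oplus> (J \<cdot> c) \<cdot> P \<oplus> ((J \<cdot> c) \<cdot> c) \<cdot> P"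
    using comp_add_left[OF Ph add_hom[OF Jh Jc] comp_hom[OF ch Jc]] comp_add_left[OF Ph Jh Jc]
    by simp
  moreover have "J \<cdot> P = \<lbrace>x, \<lbrace>y, z\<rbrace>\<rbrace>"
    unfolding J_def P_def using bracket_assoc_tens[OF x y z] .
  moreover have "(J \<cdot> c) \<cdot> P = \<lbrace>z, \<lbrace>x, y\<rbrace>\<rbrace> \<cdot> Br C (TensO C A B) D"
    unfolding c_def P_def using comp_br_cyclic[OF x y z Jh] bracket_assoc_tens[OF z x y]
    unfolding J_def by simp
  moreover have "((J \<cdot> c) \<cdot> c) \<cdot> P = (\<lbrace>y, \<lbrace>z, x\<rbrace>\<rbrace> \<cdot> Br C (TensO C D A) B) \<cdot> Br C (TensO C A B) D"
    unfolding c_def P_def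
    using comp_br_cyclic[OF x y z Jc[unfolded c_def]] comp_br_cyclic[OF z x y Jh]
      bracket_assoc_tens[OF y z x]
    unfolding J_def by simp
  ultimately show ?thesis by simp
qed

lemma bracket_right_swap:
  assumes x: "x \<in> hom C A L" and y: "y \<in> hom C B L" and z: "z \<in> hom C D L"
  shows "\<lbrace>y, \<lbrace>z, x\<rbrace>\<rbrace> = \<ominus> (\<lbrace>y, \<lbrace>x, z\<rbrace>\<rbrace> \<cdot> (Idm C B \<otimes> Br C D A))"
proof -
  have xz: "\<lbrace>x, z\<rbrace> \<in> hom C (TensO C A D) L" using bracket_hom x z by blast
  have \<rho>: "Br C D A \<in> hom C (TensO C D A) (TensO C A D)" using br_hom by blast
  have "\<lbrace>z, x\<rbrace> = \<ominus> (\<lbrace>x, z\<rbrace> \<cdot> Br C D A)"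
    using bracket_swap[OF z x] neg_neg[OF bracket_hom[OF z x]] by simp
  then have "\<lbrace>y, \<lbrace>z, x\<rbrace>\<rbrace> = \<ominus> \<lbrace>y, \<lbrace>x, z\<rbrace> \<cdot> Br C D A\<rbrace>"
    using bracket_neg_right[OF y comp_hom[OF \<rho> xz]] by simp
  also have "\<lbrace>y, \<lbrace>x, z\<rbrace> \<cdot> Br C D A\<rbrace> = \<lbrace>y, \<lbrace>x, z\<rbrace>\<rbrace> \<cdot> (Idm C B \<otimes> Br C D A)"
    using bracket_comp[OF y id_hom xz \<rho>] id_right[OF y] by simp
  finally show ?thesis .
qed

lemma bracket_bracket_left:
  assumes x: "x \<in> hom C A L" and y: "y \<in> hom C B L" and z: "z \<in> hom C D L"
  obtains \<tau> where "\<tau> \<in> hom C (TensO C A (TensO C B D)) (TensO C B (TensO C A D))"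
    and "\<lbrace>\<lbrace>x, y\<rbrace>, z\<rbrace> = \<lbrace>x, \<lbrace>y, z\<rbrace>\<rbrace> \<oplus> \<ominus> (\<lbrace>y, \<lbrace>x, z\<rbrace>\<rbrace> \<cdot> \<tau>)"
proof -
  define \<sigma>\<^sub>1 where "\<sigma>\<^sub>1 = Br C (TensO C A B) D"
  define \<sigma>\<^sub>2 where "\<sigma>\<^sub>2 = Br C (TensO C D A) B"
  define \<beta> where "\<beta> = Idm C B \<otimes> Br C D A"
  define \<tau> where "\<tau> = (\<beta> \<cdot> \<sigma>\<^sub>2) \<cdot> \<sigma>\<^sub>1"
  have \<sigma>\<^sub>1h: "\<sigma>\<^sub>1 \<in> hom C (TensO C A (TensO C B D)) (TensO C D (TensO C A B))"
    unfolding \<sigma>\<^sub>1_def using br_hom[of "TensO C A B" D] by simp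
  have \<sigma>\<^sub>2h: "\<sigma>\<^sub>2 \<in> hom C (TensO C D (TensO C A B)) (TensO C B (TensO C D A))"
    unfolding \<sigma>\<^sub>2_def using br_hom[of "TensO C D A" B] by simp
  have \<beta>h: "\<beta> \<in> hom C (TensO C B (TensO C D A)) (TensO C B (TensO C A D))"
    unfolding \<beta>_def using tens_hom[OF id_hom br_hom] .
  have \<tau>h: "\<tau> \<in> hom C (TensO C A (TensO C B D)) (TensO C B (TensO C A D))"
    unfolding \<tau>_def using comp_hom[OF \<sigma>\<^sub>1h comp_hom[OF \<sigma>\<^sub>2h \<beta>h]] .
  have xy: "\<lbrace>x, y\<rbrace> \<in> hom C (TensO C A B) L" using bracket_hom x y by blast
  have K: "\<lbrace>y, \<lbrace>x, z\<rbrace>\<rbrace> \<in> hom C (TensO C B (TensO C A D)) L"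
    using bracket_hom[OF y bracket_hom[OF x z]] by simp
  have second: "\<lbrace>z, \<lbrace>x, y\<rbrace>\<rbrace> \<cdot> \<sigma>\<^sub>1 = \<ominus> \<lbrace>\<lbrace>x, y\<rbrace>, z\<rbrace>"
    unfolding \<sigma>\<^sub>1_def using bracket_swap[OF xy z] by simp
  have "(\<lbrace>y, \<lbrace>z, x\<rbrace>\<rbrace> \<cdot> \<sigma>\<^sub>2) \<cdot> \<sigma>\<^sub>1 = ((\<ominus> (\<lbrace>y, \<lbrace>x, z\<rbrace>\<rbrace> \<cdot> \<beta>)) \<cdot> \<sigma>\<^sub>2) \<cdot> \<sigma>\<^sub>1"
    unfolding \<beta>_def using bracket_right_swap[OF x y z] by simp
  also have "\<dots> = \<ominus> ((\<lbrace>y, \<lbrace>x, z\<rbrace>\<rbrace> \<cdot> \<beta>) \<cdot> \<sigma>\<^sub>2) \<cdot> \<sigma>\<^sub>1"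
    using comp_neg_left[OF \<sigma>\<^sub>2h comp_hom[OF \<beta>h K]] by simp
  also have "\<dots> = \<ominus> (((\<lbrace>y, \<lbrace>x, z\<rbrace>\<rbrace> \<cdot> \<beta>) \<cdot> \<sigma>\<^sub>2) \<cdot> \<sigma>\<^sub>1)"
    using comp_neg_left[OF \<sigma>\<^sub>1h comp_hom[OF \<sigma>\<^sub>2h comp_hom[OF \<beta>h K]]] .
  also have "((\<lbrace>y, \<lbrace>x, z\<rbrace>\<rbrace> \<cdot> \<beta>) \<cdot> \<sigma>\<^sub>2) \<cdot> \<sigma>\<^sub>1 = \<lbrace>y, \<lbrace>x, z\<rbrace>\<rbrace> \<cdot> \<tau>"
    unfolding \<tau>_def
    using comp_assoc[OF \<sigma>\<^sub>2h \<beta>h K] comp_assoc[OF \<sigma>\<^sub>1h comp_hom[OF \<sigma>\<^sub>2h \<beta>h] K] by simp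
  finally have third: "(\<lbrace>y, \<lbrace>z, x\<rbrace>\<rbrace> \<cdot> \<sigma>\<^sub>2) \<cdot> \<sigma>\<^sub>1 = \<ominus> (\<lbrace>y, \<lbrace>x, z\<rbrace>\<rbrace> \<cdot> \<tau>)" .
  have "\<lbrace>x, \<lbrace>y, z\<rbrace>\<rbrace> \<oplus> \<ominus> \<lbrace>\<lbrace>x, y\<rbrace>, z\<rbrace> \<oplus> \<ominus> (\<lbrace>y, \<lbrace>x, z\<rbrace>\<rbrace> \<cdot> \<tau>)
      = Zero C (TensO C A (TensO C B D)) L"
    using jacobi_generalized[OF x y z] second third unfolding \<sigma>\<^sub>1_def \<sigma>\<^sub>2_def by simp
  then have "\<lbrace>\<lbrace>x, y\<rbrace>, z\<rbrace> = \<lbrace>x, \<lbrace>y, z\<rbrace>\<rbrace> \<oplus> \<ominus> (\<lbrace>y, \<lbrace>x, z\<rbrace>\<rbrace> \<cdot> \<tau>)"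
    using eq_add_if_add_neg_add_zero bracket_hom[OF x bracket_hom[OF y z]]
      bracket_hom[OF xy z] neg_hom[OF comp_hom[OF \<tau>h K]] by simp
  with \<tau>h show ?thesis using that by blast
qed

fun derived_bracket :: "nat \<Rightarrow> 'm" where
  "derived_bracket 0 = l"
| "derived_bracket (Suc k) = \<lbrace>l, derived_bracket k\<rbrace>"

inductive derived_lcs :: "nat \<Rightarrow> 'o \<Rightarrow> 'm \<Rightarrow> bool" where
  gen: "\<phi> \<in> hom C A (tpow C (Suc k) (TensO C L L)) \<Longrightarrow> derived_lcs k A (derived_bracket k \<cdot> \<phi>)"
| add: "derived_lcs k A f \<Longrightarrow> derived_lcs k A g \<Longrightarrow> derived_lcs k A (f \<oplus> g)"
| neg: "derived_lcs k A f \<Longrightarrow> derived_lcs k A (\<ominus> f)"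

lemma derived_bracket_hom: "derived_bracket k \<in> hom C (tpow C (Suc k) (TensO C L L)) L"
proof (induction k)
  case 0
  show ?case using l_hom by simp
next
  case (Suc k)
  show ?case using bracket_hom[OF l_hom Suc.IH] by simp
qed

lemma derived_bracket_eq_hpow_mpow:
  "derived_bracket (Suc k) = hpow C L l (Suc (Suc k)) \<cdot> mpow C (Suc (Suc k)) l"
proof (induction k)
  case 0
  show ?case using tensM_unit_right by (simp add: hpow_def)
next
  case (Suc k)
  have m: "mpow C (Suc (Suc k)) l \<in> hom C (tpow C (Suc (Suc k)) (TensO C L L)) (tpow C (Suc (Suc k)) L)"
    using mpow_hom[OF l_hom] .
  have n: "nest C L l k \<in> hom C (tpow C (Suc (Suc k)) L) L" using nest_hom[OF l_hom] .
  have "hpow C L l (Suc (Suc (Suc k))) \<cdot> mpow C (Suc (Suc (Suc k))) l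
      = l \<cdot> ((Idm C L \<otimes> nest C L l k) \<cdot> (l \<otimes> mpow C (Suc (Suc k)) l))"
    using comp_assoc[OF tens_hom[OF l_hom m] tens_hom[OF id_hom n] l_hom]
    by (simp add: hpow_def)
  also have "(Idm C L \<otimes> nest C L l k) \<cdot> (l \<otimes> mpow C (Suc (Suc k)) l)
      = (Idm C L \<cdot> l) \<otimes> (nest C L l k \<cdot> mpow C (Suc (Suc k)) l)"
    using tens_comp[OF l_hom id_hom m n] by simp
  finally show ?case using Suc.IH id_left[OF l_hom] by (simp add: hpow_def)
qed

lemma derived_lcs_hom: "derived_lcs k A f \<Longrightarrow> f \<in> hom C A L"
  by (induction rule: derived_lcs.induct) (use comp_hom derived_bracket_hom add_hom neg_hom in blast)+

lemma derived_lcs_comp: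
  "derived_lcs k A f \<Longrightarrow> \<phi> \<in> hom C A' A \<Longrightarrow> derived_lcs k A' (f \<cdot> \<phi>)"
proof (induction arbitrary: A' \<phi> rule: derived_lcs.induct)
  case (gen \<psi> A k)
  have "(derived_bracket k \<cdot> \<psi>) \<cdot> \<phi> = derived_bracket k \<cdot> (\<psi> \<cdot> \<phi>)"
    using comp_assoc[OF gen.prems gen.hyps derived_bracket_hom] by simp
  then show ?case using derived_lcs.gen[OF comp_hom[OF gen.prems gen.hyps]] by simp
next
  case (add k A f g)
  then show ?case
    using comp_add_left[OF add.prems derived_lcs_hom derived_lcs_hom] derived_lcs.add by simp
next
  case (neg k A f)
  then show ?case
    using comp_neg_left[OF neg.prems derived_lcs_hom] derived_lcs.neg by simp
qed

lemma derived_lcs_derived_bracket: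
  "derived_lcs k (tpow C (Suc k) (TensO C L L)) (derived_bracket k)"
  using derived_lcs.gen[OF id_hom] id_right[OF derived_bracket_hom] by metis

lemma derived_lcs_eq_zero:
  assumes "derived_lcs k A f" and "derived_bracket k = Zero C (tpow C (Suc k) (TensO C L L)) L"
  shows "f = Zero C A L"
  using assms
  by (induction rule: derived_lcs.induct) (simp_all add: comp_zero_left add_zero[OF zero_hom] neg_zero)

lemma derived_lcs_bracket_generator_left:
  assumes \<phi>: "\<phi> \<in> hom C A (tpow C (Suc i) (TensO C L L))"
    and gens: "\<And>j. derived_lcs (Suc (i + j))
        (TensO C (tpow C (Suc i) (TensO C L L)) (tpow C (Suc j) (TensO C L L)))
        \<lbrace>derived_bracket i, derived_bracket j\<rbrace>"
    and b: "derived_lcs j B b"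
  shows "derived_lcs (Suc (i + j)) (TensO C A B) \<lbrace>derived_bracket i \<cdot> \<phi>, b\<rbrace>"
  using b
proof (induction rule: derived_lcs.induct)
  case (gen \<psi> B j)
  then show ?case
    using bracket_comp[OF derived_bracket_hom \<phi> derived_bracket_hom gen]
      derived_lcs_comp[OF gens tens_hom[OF \<phi> gen]] by simp
next
  case (add j B f g)
  then show ?case
    using bracket_add_right[OF comp_hom[OF \<phi> derived_bracket_hom] derived_lcs_hom derived_lcs_hom]
      derived_lcs.add by simp
next
  case (neg j B f)
  then show ?case
    using bracket_neg_right[OF comp_hom[OF \<phi> derived_bracket_hom] derived_lcs_hom]
      derived_lcs.neg by simp
qed

lemma derived_lcs_bracket_of_generators:
  assumes a: "derived_lcs i A a"
    and gens: "\<And>j. derived_lcs (Suc (i + j))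
        (TensO C (tpow C (Suc i) (TensO C L L)) (tpow C (Suc j) (TensO C L L)))
        \<lbrace>derived_bracket i, derived_bracket j\<rbrace>"
    and b: "derived_lcs j B b"
  shows "derived_lcs (Suc (i + j)) (TensO C A B) \<lbrace>a, b\<rbrace>"
  using a gens
proof (induction rule: derived_lcs.induct)
  case (gen \<phi> A i)
  then show ?case using derived_lcs_bracket_generator_left[OF _ _ b] by blast
next
  case (add i A f g)
  then show ?case
    using bracket_add_left[OF derived_lcs_hom derived_lcs_hom derived_lcs_hom[OF b]]
      derived_lcs.add by simp
next
  case (neg i A f)
  then show ?case
    using bracket_neg_left[OF derived_lcs_hom derived_lcs_hom[OF b]] derived_lcs.neg by simp
qed

lemma derived_lcs_bracket_0:
  assumes "derived_lcs 0 A a" and "derived_lcs j B b"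
  shows "derived_lcs (Suc j) (TensO C A B) \<lbrace>a, b\<rbrace>"
  using derived_lcs_bracket_of_generators[OF assms(1) _ assms(2)]
    derived_lcs_derived_bracket[of "Suc _"] by simp

lemma derived_lcs_bracket:
  "derived_lcs i A a \<Longrightarrow> derived_lcs j B b \<Longrightarrow> derived_lcs (Suc (i + j)) (TensO C A B) \<lbrace>a, b\<rbrace>"
proof (induction i arbitrary: j A B a b)
  case 0
  then show ?case using derived_lcs_bracket_0 by simp
next
  case (Suc i)
  txt \<open>Jacobi splits \<open>\<lbrace>d_(i+1), d_j\<rbrace>\<close> into \<open>\<lbrace>\<ell>, \<lbrace>d_i, d_j\<rbrace>\<rbrace>\<close> and \<open>\<lbrace>d_i, d_(j+1)\<rbrace> \<circ> \<tau>\<close>,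
    both covered by the induction hypothesis.\<close>
  have "derived_lcs (Suc (Suc i + j))
      (TensO C (tpow C (Suc (Suc i)) (TensO C L L)) (tpow C (Suc j) (TensO C L L)))
      \<lbrace>derived_bracket (Suc i), derived_bracket j\<rbrace>" for j
  proof -
    let ?P = "\<lambda>n. tpow C n (TensO C L L)"
    obtain \<tau> where \<tau>: "\<tau> \<in> hom C (TensO C (TensO C L L) (TensO C (?P (Suc i)) (?P (Suc j))))
        (TensO C (?P (Suc i)) (TensO C (TensO C L L) (?P (Suc j))))"
      and jacobi: "\<lbrace>\<lbrace>l, derived_bracket i\<rbrace>, derived_bracket j\<rbrace>
        = \<lbrace>l, \<lbrace>derived_bracket i, derived_bracket j\<rbrace>\<rbrace>
          \<oplus> \<ominus> (\<lbrace>derived_bracket i, \<lbrace>l, derived_bracket j\<rbrace>\<rbrace> \<cdot> \<tau>)"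
      by (rule bracket_bracket_left[OF l_hom derived_bracket_hom derived_bracket_hom])
    have "derived_lcs (Suc (Suc (i + j))) (TensO C (TensO C L L) (TensO C (?P (Suc i)) (?P (Suc j))))
        \<lbrace>l, \<lbrace>derived_bracket i, derived_bracket j\<rbrace>\<rbrace>"
      using derived_lcs_bracket_0[OF derived_lcs_derived_bracket[of 0]
          Suc.IH[OF derived_lcs_derived_bracket derived_lcs_derived_bracket]] by simp
    moreover have "derived_lcs (Suc (i + Suc j)) (TensO C (?P (Suc i)) (TensO C (TensO C L L) (?P (Suc j))))
        \<lbrace>derived_bracket i, \<lbrace>l, derived_bracket j\<rbrace>\<rbrace>"
      using Suc.IH[OF derived_lcs_derived_bracket derived_lcs_derived_bracket[of "Suc j"]] by simp
    ultimately show ?thesis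
      using jacobi derived_lcs.add derived_lcs.neg derived_lcs_comp[OF _ \<tau>] by simp
  qed
  then show ?case using derived_lcs_bracket_of_generators[OF Suc.prems(1) _ Suc.prems(2)] by blast
qed

lemma dnest_in_derived_lcs: "derived_lcs (2 ^ k - 1) (tpow C (2 ^ Suc k) L) (dnest C l k)"
proof (induction k)
  case 0
  show ?case using derived_lcs_derived_bracket[of 0] by (simp add: numeral_2_eq_2)
next
  case (Suc k)
  have "(1::nat) \<le> 2 ^ k" by simp
  then have "Suc ((2 ^ k - 1) + (2 ^ k - 1)) = 2 ^ Suc k - (1::nat)"
    by (simp only: power_Suc)
  then show ?case
    using derived_lcs_bracket[OF Suc.IH Suc.IH] tpow_add[of "2 ^ Suc k" L "2 ^ Suc k"] by simp
qed

lemma derived_bracket_eventually_zero: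
  assumes "derived_nilpotent C L l"
  obtains N where "\<And>k. k \<ge> N \<Longrightarrow> derived_bracket k = Zero C (tpow C (Suc k) (TensO C L L)) L"
proof -
  obtain N where N: "\<And>n. n \<ge> N \<Longrightarrow> hpow C L l n \<cdot> mpow C n l = Zero C (tpow C n (TensO C L L)) L"
    using assms unfolding derived_nilpotent_def by blast
  have "derived_bracket k = Zero C (tpow C (Suc k) (TensO C L L)) L" if k: "k \<ge> Suc N" for k
  proof -
    obtain k' where k': "k = Suc k'" using k by (cases k) auto
    show ?thesis using derived_bracket_eq_hpow_mpow[of k'] N[of "Suc (Suc k')"] k k' by simp
  qed
  then show ?thesis using that by blast
qed

end

theorem mainTheorem1:
  fixes C :: "('o, 'm) smcat" and L :: 'o and l :: 'm
  assumes "add_sym_mon_cat C"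
    and "lie_algebra C L l"
    and "derived_nilpotent C L l"
  shows "solvable C L l"
proof -
  interpret lie_algebra_object C L l
    using assms(1,2) by (simp add: lie_algebra_object_def lie_algebra_object_axioms_def)
  obtain N where N: "\<And>k. k \<ge> N \<Longrightarrow> derived_bracket k = Zero C (tpow C (Suc k) (TensO C L L)) L"
    using derived_bracket_eventually_zero[OF assms(3)] by blast
  have "dpow C l n = Zero C (tpow C (2 ^ (n - 1)) L) L" if n: "n \<ge> N + 2" for n
  proof -
    define k where "k = n - 2"
    have "N \<le> 2 ^ k - 1" using less_exp[of k] n unfolding k_def by linarith
    then have "dnest C l k = Zero C (tpow C (2 ^ Suc k) L) L"
      using derived_lcs_eq_zero[OF dnest_in_derived_lcs N] by simp
    moreover have "Suc k = n - 1" "dpow C l n = dnest C l k" using n unfolding k_def dpow_def by auto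
    ultimately show ?thesis by simp
  qed
  then show ?thesis unfolding solvable_def by blast
qed

end
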